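(* Let $\alpha\in[0,1)$, let $s\geq 1$, $t\geq 1$ and $p\geq 1$ be integers, and let $n_{1}\geq n_{2}\geq\cdots\geq n_{t}\geq p$ be positive integers with $n=\sum_{i=1}^{t}n_{i}+s$ and $n_{1}\leq n-s-p(t-1)$. Then $$\rho_{\alpha}\big(K_{s}\vee(K_{n_{1}}\cup K_{n_{2}}\cup\cdots\cup K_{n_{t}})\big)\leq\rho_{\alpha}\big(K_{s}\vee(K_{n-s-p(t-1)}\cup(t-1)K_{p})\big),$$ with equality if and only if $(n_1,n_2,\ldots,n_t)=(n-s-p(t-1),p,\ldots,p)$.
   Context: For a graph $G$, $A(G)$ is its adjacency matrix and $D(G)$ the diagonal matrix of vertex degrees. For $\alpha\in[0,1]$, $A_{\alpha}(G)=\alpha D(G)+(1-\alpha)A(G)$, and $\rho_{\alpha}(G)$ denotes the largest eigenvalue of $A_{\alpha}(G)$. $K_m$ is the complete graph on $m$ vertices, $(t-1)K_p$ is the disjoint union of $t-1$ copies of $K_p$, $\cup$ denotes disjoint union, and $G_1\vee G_2$ (join) is obtained from $G_1\cup G_2$ by adding all edges between $V(G_1)$ and $V(G_2)$. *)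

theory Defs
  imports "Jordan_Normal_Form.Char_Poly"
begin

text \<open>Graphs on the vertex set {0..<n}, given by a symmetric irreflexive relation E.\<close>

definition adj_mat :: "nat \<Rightarrow> (nat \<Rightarrow> nat \<Rightarrow> bool) \<Rightarrow> real mat" where
  "adj_mat n E = mat n n (\<lambda>(i,j). if E i j then 1 else 0)"

definition vdeg :: "nat \<Rightarrow> (nat \<Rightarrow> nat \<Rightarrow> bool) \<Rightarrow> nat \<Rightarrow> nat" where
  "vdeg n E i = card {k \<in> {0..<n}. E i k}"

definition deg_mat :: "nat \<Rightarrow> (nat \<Rightarrow> nat \<Rightarrow> bool) \<Rightarrow> real mat" where
  "deg_mat n E = mat n n (\<lambda>(i,j). if i = j then real (vdeg n E i) else 0)"

definition A_alpha :: "real \<Rightarrow> nat \<Rightarrow> (nat \<Rightarrow> nat \<Rightarrow> bool) \<Rightarrow> real mat" where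
  "A_alpha \<alpha> n E = \<alpha> \<cdot>\<^sub>m deg_mat n E + (1 - \<alpha>) \<cdot>\<^sub>m adj_mat n E"

definition rho_alpha :: "real \<Rightarrow> nat \<Rightarrow> (nat \<Rightarrow> nat \<Rightarrow> bool) \<Rightarrow> real" where
  "rho_alpha \<alpha> n E = Max {k. eigenvalue (A_alpha \<alpha> n E) k}"

text \<open>Index of the clique containing position k of the disjoint union of cliques
  of sizes ns (positions 0..<sum_list ns, blocks laid out consecutively).\<close>
definition blk :: "nat list \<Rightarrow> nat \<Rightarrow> nat" where
  "blk ns k = (LEAST j. k < sum_list (take (Suc j) ns))"

text \<open>K_s join (K_{n_1} \<union> ... \<union> K_{n_t}): vertices 0..<s form K_s,
  vertices s..<s + sum_list ns form the cliques.\<close>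
definition join_cliques_adj :: "nat \<Rightarrow> nat list \<Rightarrow> nat \<Rightarrow> nat \<Rightarrow> bool" where
  "join_cliques_adj s ns u v \<longleftrightarrow> u \<noteq> v \<and> u < s + sum_list ns \<and> v < s + sum_list ns \<and>
     (u < s \<or> v < s \<or> blk ns (u - s) = blk ns (v - s))"

definition rho_join_cliques :: "real \<Rightarrow> nat \<Rightarrow> nat list \<Rightarrow> real" where
  "rho_join_cliques \<alpha> s ns = rho_alpha \<alpha> (s + sum_list ns) (join_cliques_adj s ns)"

end

theory Submission
  imports Defs
begin

(*
  Let Y be the sum of an eigenvector of A_alpha over the core K_s and S_j its sum over the
  j-th clique, of size m_j. Summing the eigen-equations over a clique gives
  (mu - pi m_j) S_j = m_j (1 - alpha) Y with the pole pi m = m - 1 + alpha s; summing them over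
  the core then shows that an eigenvalue mu to the right of all poles (and of alpha n - 1) is a
  root of the secular function
    F x = x - alpha (n - 1) - (1 - alpha) (s - 1) - s (1 - alpha)^2 sum_j m_j / (x - pi m_j).
  Conversely every such root is an eigenvalue, with an eigenvector constant on the core and on
  each clique. F increases strictly to the right of the largest pole and changes sign there,
  so rho_alpha is its unique root in that range.

  With c = x + 1 - alpha s the sum in F is sum_j m_j / (c - m_j), and y / (c - y) is convex.
  Moving the excess m_j - p of every clique but the first into the first one keeps n fixed and
  strictly increases this sum unless nothing moves. So the secular function of the extremal
  sizes is negative at the root for (n_1, ..., n_t), which therefore lies left of its root.
*)

section \<open>Blocks of consecutive positions\<close>

lemma sum_list_take_mono:
  fixes xs :: "'a::canonically_ordered_monoid_add list"
  assumes "i \<le> j"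
  shows "sum_list (take i xs) \<le> sum_list (take j xs)"
proof -
  obtain d where "j = i + d" using assms le_Suc_ex by blast
  then show ?thesis by (auto simp: take_add le_iff_add)
qed

lemma blk_eqI:
  assumes "sum_list (take j ns) \<le> k" and "k < sum_list (take (Suc j) ns)"
  shows "blk ns k = j"
  unfolding blk_def
proof (rule Least_equality)
  fix i assume i: "k < sum_list (take (Suc i) ns)"
  show "j \<le> i"
  proof (rule ccontr)
    assume "\<not> j \<le> i"
    then have "sum_list (take (Suc i) ns) \<le> sum_list (take j ns)"
      by (intro sum_list_take_mono) simp
    with assms(1) i show False by simp
  qed
qed fact

lemma blk_bounds:
  assumes "k < sum_list ns"
  shows "blk ns k < length ns" and "sum_list (take (blk ns k) ns) \<le> k"
    and "k < sum_list (take (Suc (blk ns k)) ns)"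
proof -
  let ?Q = "\<lambda>j. k < sum_list (take (Suc j) ns)"
  have "?Q (length ns - 1)" using assms by (cases ns) auto
  then have "?Q (blk ns k)" and "blk ns k \<le> length ns - 1"
    unfolding blk_def by (rule LeastI, rule Least_le)
  moreover have "length ns > 0" using assms by (cases ns) auto
  ultimately show "blk ns k < length ns" and "k < sum_list (take (Suc (blk ns k)) ns)"
    by linarith+
  show "sum_list (take (blk ns k) ns) \<le> k"
  proof (cases "blk ns k")
    case (Suc i)
    then have "\<not> ?Q i" unfolding blk_def by (intro not_less_Least) simp
    then show ?thesis using Suc by simp
  qed simp
qed

definition block :: "nat list \<Rightarrow> nat \<Rightarrow> nat set" where
  "block ns j = {k. k < sum_list ns \<and> blk ns k = j}"

lemma block_eq_atLeastLessThan:
  assumes "j < length ns"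
  shows "block ns j = {sum_list (take j ns)..<sum_list (take (Suc j) ns)}"
proof -
  have "sum_list (take (Suc j) ns) \<le> sum_list ns"
    using sum_list_take_mono[of "Suc j" "length ns" ns] assms by simp
  then show ?thesis
    unfolding block_def using blk_bounds blk_eqI by fastforce
qed

lemma card_block: "j < length ns \<Longrightarrow> card (block ns j) = ns ! j"
  by (simp add: block_eq_atLeastLessThan take_Suc_conv_app_nth)

lemma sum_lessThan_sum_list_by_blocks:
  "(\<Sum>k<sum_list ns. f k) = (\<Sum>j<length ns. \<Sum>k\<in>block ns j. f k)"
proof -
  have "block ns j = {k \<in> {..<sum_list ns}. blk ns k = j}" for j
    unfolding block_def by auto
  then show ?thesis
    by (simp only:) (rule sum.group[symmetric], auto dest: blk_bounds)
qed

section \<open>The matrix \<open>A_alpha\<close> of \<open>K_s\<close> joined with a union of cliques\<close>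

lemma dim_A_alpha [simp]: "dim_row (A_alpha \<alpha> n E) = n" "dim_col (A_alpha \<alpha> n E) = n"
  unfolding A_alpha_def deg_mat_def adj_mat_def by simp_all

lemma A_alpha_carrier_mat: "A_alpha \<alpha> n E \<in> carrier_mat n n"
  by (simp add: carrier_matI)

lemma A_alpha_mult_vec_nth:
  assumes "v \<in> carrier_vec n" and "u < n"
  shows "(A_alpha \<alpha> n E *\<^sub>v v) $ u
    = \<alpha> * real (vdeg n E u) * v $ u + (1 - \<alpha>) * (\<Sum>w\<in>{w \<in> {0..<n}. E u w}. v $ w)"
proof -
  have "(A_alpha \<alpha> n E *\<^sub>v v) $ u
      = (\<Sum>w<n. \<alpha> * (if u = w then real (vdeg n E u) else 0) * v $ w)
        + (\<Sum>w<n. (1 - \<alpha>) * (if E u w then v $ w else 0))"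
    using assms unfolding A_alpha_def deg_mat_def adj_mat_def
    by (simp add: scalar_prod_def lessThan_atLeast0 sum.distrib[symmetric] algebra_simps)
      (rule sum.cong; simp)
  also have "(\<Sum>w<n. \<alpha> * (if u = w then real (vdeg n E u) else 0) * v $ w)
      = (\<Sum>w<n. if u = w then \<alpha> * real (vdeg n E u) * v $ u else 0)"
    by (rule sum.cong) auto
  also have "(\<Sum>w<n. (1 - \<alpha>) * (if E u w then v $ w else 0))
      = (1 - \<alpha>) * (\<Sum>w\<in>{w \<in> {0..<n}. E u w}. v $ w)"
    unfolding sum_distrib_left[symmetric] lessThan_atLeast0 by (subst sum.inter_filter) simp_all
  finally show ?thesis
    using assms(2) by simp
qed

lemma join_cliques_nbhd:
  assumes "u < s + sum_list ns"
  shows "{w \<in> {0..<s + sum_list ns}. join_cliques_adj s ns u w}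
    = ({..<s} \<union> (+) s ` (if u < s then {..<sum_list ns} else block ns (blk ns (u - s)))) - {u}"
proof -
  have shift: "(+) s ` K = {w. s \<le> w \<and> w - s \<in> K}" for K
    by (force simp: image_iff)
  show ?thesis
    using assms unfolding join_cliques_adj_def block_def shift by auto
qed

lemma sum_lessThan_Un_shift_remove:
  fixes f :: "nat \<Rightarrow> 'a::ab_group_add"
  assumes "finite K" and "u \<in> {..<s} \<union> (+) s ` K"
  shows "sum f (({..<s} \<union> (+) s ` K) - {u}) = sum f {..<s} + (\<Sum>k\<in>K. f (s + k)) - f u"
proof -
  have "sum f ({..<s} \<union> (+) s ` K) = sum f {..<s} + sum f ((+) s ` K)"
    using assms(1) by (intro sum.union_disjoint) auto
  then show ?thesis
    using assms by (simp add: sum_diff1 sum.reindex)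
qed

lemma join_cliques_mult_vec_nth:
  assumes "v \<in> carrier_vec (s + sum_list ns)" and "u < s + sum_list ns"
    and K: "K = (if u < s then {..<sum_list ns} else block ns (blk ns (u - s)))"
  shows "(A_alpha \<alpha> (s + sum_list ns) (join_cliques_adj s ns) *\<^sub>v v) $ u
    = \<alpha> * (real (s + card K) - 1) * v $ u
      + (1 - \<alpha>) * ((\<Sum>w<s. v $ w) + (\<Sum>k\<in>K. v $ (s + k)) - v $ u)"
proof -
  have "finite K" unfolding K block_def by auto
  have "u \<in> {..<s} \<union> (+) s ` K"
  proof (cases "u < s")
    case False
    then have "u - s \<in> K" using assms(2) unfolding K block_def by auto
    then have "s + (u - s) \<in> (+) s ` K" by blast
    with False show ?thesis by simp
  qed simp
  note nbhd_sum = sum_lessThan_Un_shift_remove[OF \<open>finite K\<close> this]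
  have nbhd: "{w \<in> {0..<s + sum_list ns}. join_cliques_adj s ns u w} = ({..<s} \<union> (+) s ` K) - {u}"
    unfolding K by (rule join_cliques_nbhd[OF assms(2)])
  have "real (vdeg (s + sum_list ns) (join_cliques_adj s ns) u) = real (s + card K) - 1"
    unfolding vdeg_def nbhd real_of_card nbhd_sum by simp
  then show ?thesis
    unfolding A_alpha_mult_vec_nth[OF assms(1,2)] nbhd nbhd_sum by simp
qed

lemma join_cliques_mult_vec_core:
  assumes "v \<in> carrier_vec (s + sum_list ns)" and "u < s"
  shows "(A_alpha \<alpha> (s + sum_list ns) (join_cliques_adj s ns) *\<^sub>v v) $ u
    = \<alpha> * (real (s + sum_list ns) - 1) * v $ u
      + (1 - \<alpha>) * ((\<Sum>w<s. v $ w) + (\<Sum>k<sum_list ns. v $ (s + k)) - v $ u)"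
  using join_cliques_mult_vec_nth[OF assms(1) _ refl, of u] assms(2) by simp

lemma join_cliques_mult_vec_block:
  assumes "v \<in> carrier_vec (s + sum_list ns)" and "k \<in> block ns j"
  shows "(A_alpha \<alpha> (s + sum_list ns) (join_cliques_adj s ns) *\<^sub>v v) $ (s + k)
    = \<alpha> * (real (s + ns ! j) - 1) * v $ (s + k)
      + (1 - \<alpha>) * ((\<Sum>w<s. v $ w) + (\<Sum>i\<in>block ns j. v $ (s + i)) - v $ (s + k))"
proof -
  have k: "k < sum_list ns" "blk ns k = j" using assms(2) unfolding block_def by auto
  then have "j < length ns" using blk_bounds(1) by blast
  then show ?thesis
    using join_cliques_mult_vec_nth[OF assms(1) _ refl, of "s + k"] k card_block by simp
qed

section \<open>Eigenvectors and the secular function\<close>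

definition clique_pole :: "real \<Rightarrow> nat \<Rightarrow> nat \<Rightarrow> real" where
  "clique_pole \<alpha> s m = real m - 1 + \<alpha> * real s"

definition secular :: "real \<Rightarrow> nat \<Rightarrow> nat list \<Rightarrow> real \<Rightarrow> real" where
  "secular \<alpha> s ns x = x - \<alpha> * (real (s + sum_list ns) - 1) - (1 - \<alpha>) * (real s - 1)
     - real s * (1 - \<alpha>)\<^sup>2 * (\<Sum>m\<leftarrow>ns. real m / (x - clique_pole \<alpha> s m))"

lemma sum_lessThan_length_nth: "(\<Sum>j<length xs. f (xs ! j)) = (\<Sum>x\<leftarrow>xs. f x)"
  by (simp add: sum_list_sum_nth atLeast0LessThan)

context
  fixes \<alpha> \<mu> :: real and s :: nat and ns :: "nat list" and v :: "real vec"
  assumes v_carrier: "v \<in> carrier_vec (s + sum_list ns)"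
    and eigen: "A_alpha \<alpha> (s + sum_list ns) (join_cliques_adj s ns) *\<^sub>v v = \<mu> \<cdot>\<^sub>v v"
begin

lemma join_cliques_eigen_core:
  assumes "u < s"
  shows "(\<mu> - \<alpha> * real (s + sum_list ns) + 1) * v $ u
    = (1 - \<alpha>) * ((\<Sum>w<s. v $ w) + (\<Sum>k<sum_list ns. v $ (s + k)))"
proof -
  have "(A_alpha \<alpha> (s + sum_list ns) (join_cliques_adj s ns) *\<^sub>v v) $ u = \<mu> * v $ u"
    using eigen v_carrier assms by simp
  then show ?thesis
    unfolding join_cliques_mult_vec_core[OF v_carrier assms] by (simp add: algebra_simps)
qed

lemma join_cliques_eigen_block:
  assumes "k \<in> block ns j"
  shows "(\<mu> - \<alpha> * real (s + ns ! j) + 1) * v $ (s + k)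
    = (1 - \<alpha>) * ((\<Sum>w<s. v $ w) + (\<Sum>i\<in>block ns j. v $ (s + i)))"
proof -
  have "s + k < s + sum_list ns" using assms unfolding block_def by simp
  then have "(A_alpha \<alpha> (s + sum_list ns) (join_cliques_adj s ns) *\<^sub>v v) $ (s + k) = \<mu> * v $ (s + k)"
    using eigen v_carrier by simp
  then show ?thesis
    unfolding join_cliques_mult_vec_block[OF v_carrier assms] by (simp add: algebra_simps)
qed

lemma join_cliques_eigen_core_sum:
  "(\<mu> - \<alpha> * real (s + sum_list ns) + 1) * (\<Sum>w<s. v $ w)
    = real s * (1 - \<alpha>) * ((\<Sum>w<s. v $ w) + (\<Sum>k<sum_list ns. v $ (s + k)))"
  by (simp add: sum_distrib_left join_cliques_eigen_core del: of_nat_add)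

lemma join_cliques_eigen_block_sum:
  assumes "j < length ns"
  shows "(\<mu> - clique_pole \<alpha> s (ns ! j)) * (\<Sum>i\<in>block ns j. v $ (s + i))
    = real (ns ! j) * (1 - \<alpha>) * (\<Sum>w<s. v $ w)"
proof -
  have "(\<mu> - \<alpha> * real (s + ns ! j) + 1) * (\<Sum>i\<in>block ns j. v $ (s + i))
      = real (ns ! j) * (1 - \<alpha>) * ((\<Sum>w<s. v $ w) + (\<Sum>i\<in>block ns j. v $ (s + i)))"
    using card_block[OF assms] by (simp add: sum_distrib_left join_cliques_eigen_block del: of_nat_add)
  then show ?thesis
    unfolding clique_pole_def by (simp add: algebra_simps)
qed

lemma join_cliques_eigen_core_sum_nonzero:
  assumes "v \<noteq> 0\<^sub>v (s + sum_list ns)" and "0 \<le> \<alpha>"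
    and poles: "\<forall>m\<in>set ns. clique_pole \<alpha> s m < \<mu>"
    and large: "\<alpha> * real (s + sum_list ns) - 1 < \<mu>"
  shows "(\<Sum>w<s. v $ w) \<noteq> 0"
proof
  assume core: "(\<Sum>w<s. v $ w) = 0"
  have block: "(\<Sum>i\<in>block ns j. v $ (s + i)) = 0" if "j < length ns" for j
  proof -
    have "\<mu> - clique_pole \<alpha> s (ns ! j) \<noteq> 0" using poles nth_mem[OF that] by fastforce
    then show ?thesis using join_cliques_eigen_block_sum[OF that] core by simp
  qed
  have "v $ u = 0" if "u < s + sum_list ns" for u
  proof (cases "u < s")
    case True
    have "(\<Sum>k<sum_list ns. v $ (s + k)) = 0"
      unfolding sum_lessThan_sum_list_by_blocks using block by simp
    moreover have "\<mu> - \<alpha> * real (s + sum_list ns) + 1 \<noteq> 0" using large by simp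
    ultimately show ?thesis using join_cliques_eigen_core[OF True] core by simp
  next
    case False
    define k where "k = u - s"
    have k: "k \<in> block ns (blk ns k)" "u = s + k"
      using that False unfolding k_def block_def by auto
    then have "ns ! blk ns k \<le> sum_list ns"
      using blk_bounds(1) elem_le_sum_list unfolding block_def by blast
    then have "\<alpha> * real (s + ns ! blk ns k) \<le> \<alpha> * real (s + sum_list ns)"
      using \<open>0 \<le> \<alpha>\<close> by (intro mult_left_mono) auto
    then have "\<mu> - \<alpha> * real (s + ns ! blk ns k) + 1 \<noteq> 0" using large by linarith
    then show ?thesis
      using join_cliques_eigen_block[OF k(1)] core block[OF blk_bounds(1)] k unfolding block_def
      by simp
  qed
  then have "v = 0\<^sub>v (s + sum_list ns)" using v_carrier by (intro eq_vecI) auto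
  with assms(1) show False ..
qed

lemma join_cliques_eigenvalue_secular_root:
  assumes "v \<noteq> 0\<^sub>v (s + sum_list ns)" and "0 \<le> \<alpha>"
    and poles: "\<forall>m\<in>set ns. clique_pole \<alpha> s m < \<mu>"
    and large: "\<alpha> * real (s + sum_list ns) - 1 < \<mu>"
  shows "secular \<alpha> s ns \<mu> = 0"
proof -
  define Y where "Y = (\<Sum>w<s. v $ w)"
  define g where "g m = real m / (\<mu> - clique_pole \<alpha> s m)" for m
  have "Y \<noteq> 0" unfolding Y_def by (rule join_cliques_eigen_core_sum_nonzero[OF assms])
  have block: "(\<Sum>i\<in>block ns j. v $ (s + i)) = (1 - \<alpha>) * Y * g (ns ! j)" if "j < length ns" for j
  proof -
    have "\<mu> - clique_pole \<alpha> s (ns ! j) \<noteq> 0" using poles nth_mem[OF that] by fastforce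
    then show ?thesis
      using join_cliques_eigen_block_sum[OF that] unfolding g_def Y_def by (simp add: field_simps)
  qed
  define Q where "Q = (\<Sum>m\<leftarrow>ns. g m)"
  have Z: "(\<Sum>k<sum_list ns. v $ (s + k)) = (1 - \<alpha>) * Y * Q"
    unfolding sum_lessThan_sum_list_by_blocks Q_def sum_lessThan_length_nth[symmetric]
      sum_distrib_left
    using block by simp
  have "Y * secular \<alpha> s ns \<mu>
      = (\<mu> - \<alpha> * real (s + sum_list ns) + 1) * Y - real s * (1 - \<alpha>) * (Y + (1 - \<alpha>) * Y * Q)"
    unfolding secular_def Q_def g_def by (simp add: algebra_simps power2_eq_square)
  also have "\<dots> = 0"
    using join_cliques_eigen_core_sum unfolding Z Y_def by simp
  finally have "Y * secular \<alpha> s ns \<mu> = 0" .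
  with \<open>Y \<noteq> 0\<close> show ?thesis by simp
qed

end

(* Normalised to 1 on the core; on a clique of size m its value x solves the summed block
   equation (r - clique_pole m) x = (1 - alpha) s. *)
definition secular_eigenvector :: "real \<Rightarrow> nat \<Rightarrow> nat list \<Rightarrow> real \<Rightarrow> real vec" where
  "secular_eigenvector \<alpha> s ns r = vec (s + sum_list ns) (\<lambda>u. if u < s then 1
     else (1 - \<alpha>) * real s / (r - clique_pole \<alpha> s (ns ! blk ns (u - s))))"

lemma secular_eigenvector_carrier: "secular_eigenvector \<alpha> s ns r \<in> carrier_vec (s + sum_list ns)"
  unfolding secular_eigenvector_def by simp

lemma secular_eigenvector_core: "u < s \<Longrightarrow> secular_eigenvector \<alpha> s ns r $ u = 1"
  unfolding secular_eigenvector_def by simp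

lemma secular_eigenvector_block:
  "k \<in> block ns j \<Longrightarrow>
    secular_eigenvector \<alpha> s ns r $ (s + k) = (1 - \<alpha>) * real s / (r - clique_pole \<alpha> s (ns ! j))"
  unfolding secular_eigenvector_def block_def by simp

lemma secular_eigenvector_nonzero:
  assumes "s \<ge> 1"
  shows "secular_eigenvector \<alpha> s ns r \<noteq> 0\<^sub>v (s + sum_list ns)"
proof
  assume "secular_eigenvector \<alpha> s ns r = 0\<^sub>v (s + sum_list ns)"
  then have "secular_eigenvector \<alpha> s ns r $ 0 = 0" using assms by simp
  with secular_eigenvector_core[of 0] assms show False by simp
qed

lemma secular_eigenvector_eigen:
  assumes poles: "\<forall>m\<in>set ns. clique_pole \<alpha> s m < r" and root: "secular \<alpha> s ns r = 0"
  shows "A_alpha \<alpha> (s + sum_list ns) (join_cliques_adj s ns) *\<^sub>v secular_eigenvector \<alpha> s ns r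
    = r \<cdot>\<^sub>v secular_eigenvector \<alpha> s ns r"
proof -
  define v where "v = secular_eigenvector \<alpha> s ns r"
  define x where "x m = (1 - \<alpha>) * real s / (r - clique_pole \<alpha> s m)" for m
  define Q where "Q = (\<Sum>m\<leftarrow>ns. real m / (r - clique_pole \<alpha> s m))"
  have v_carrier: "v \<in> carrier_vec (s + sum_list ns)"
    unfolding v_def by (rule secular_eigenvector_carrier)
  have core: "(\<Sum>w<s. v $ w) = real s" unfolding v_def by (simp add: secular_eigenvector_core)
  have block: "(\<Sum>i\<in>block ns j. v $ (s + i)) = real (ns ! j) * x (ns ! j)" if "j < length ns" for j
    using secular_eigenvector_block card_block[OF that] unfolding v_def x_def by simp
  have cliques: "(\<Sum>k<sum_list ns. v $ (s + k)) = (1 - \<alpha>) * real s * Q"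
    unfolding sum_lessThan_sum_list_by_blocks Q_def sum_lessThan_length_nth[symmetric]
      sum_distrib_left
    using block by (intro sum.cong) (simp_all add: x_def)
  have "(A_alpha \<alpha> (s + sum_list ns) (join_cliques_adj s ns) *\<^sub>v v) $ u = r * v $ u"
    if "u < s + sum_list ns" for u
  proof (cases "u < s")
    case True
    have r: "r = \<alpha> * (real (s + sum_list ns) - 1) + (1 - \<alpha>) * (real s - 1)
        + real s * (1 - \<alpha>)\<^sup>2 * Q"
      using root unfolding secular_def Q_def by simp
    have "v $ u = 1" unfolding v_def using True by (rule secular_eigenvector_core)
    then show ?thesis
      using join_cliques_mult_vec_core[where \<alpha> = \<alpha>, OF v_carrier True]
      unfolding core cliques by (simp add: r algebra_simps power2_eq_square)
  next
    case False
    define k where "k = u - s"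
    define m where "m = ns ! blk ns k"
    have k: "k \<in> block ns (blk ns k)" and u: "u = s + k"
      using that False unfolding k_def block_def by auto
    have j: "blk ns k < length ns" using k blk_bounds(1) unfolding block_def by simp
    then have "x m * (r - clique_pole \<alpha> s m) = (1 - \<alpha>) * real s"
      using poles unfolding x_def m_def by fastforce
    moreover have "v $ (s + k) = x m"
      unfolding v_def secular_eigenvector_block[OF k] x_def m_def ..
    ultimately show ?thesis
      using join_cliques_mult_vec_block[where \<alpha> = \<alpha>, OF v_carrier k]
      unfolding u core block[OF j] m_def[symmetric] by (simp add: clique_pole_def algebra_simps)
  qed
  then show ?thesis
    using v_carrier unfolding v_def[symmetric] by (intro eq_vecI) auto
qed

lemma secular_root_is_eigenvalue:
  assumes "s \<ge> 1" and "\<forall>m\<in>set ns. clique_pole \<alpha> s m < r" and "secular \<alpha> s ns r = 0"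
  shows "eigenvalue (A_alpha \<alpha> (s + sum_list ns) (join_cliques_adj s ns)) r"
  unfolding eigenvalue_def eigenvector_def
  using secular_eigenvector_eigen[OF assms(2,3)] secular_eigenvector_nonzero[OF assms(1)]
    secular_eigenvector_carrier
  by (intro exI[where x = "secular_eigenvector \<alpha> s ns r"]) simp

section \<open>The spectral radius as a root of the secular function\<close>

lemma secular_strict_mono:
  assumes "\<forall>m\<in>set ns. clique_pole \<alpha> s m < x" and "x < y"
  shows "secular \<alpha> s ns x < secular \<alpha> s ns y"
proof -
  have "(\<Sum>m\<leftarrow>ns. real m / (y - clique_pole \<alpha> s m)) \<le> (\<Sum>m\<leftarrow>ns. real m / (x - clique_pole \<alpha> s m))"
    using assms by (intro sum_list_mono divide_left_mono) auto
  then have "real s * (1 - \<alpha>)\<^sup>2 * (\<Sum>m\<leftarrow>ns. real m / (y - clique_pole \<alpha> s m))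
      \<le> real s * (1 - \<alpha>)\<^sup>2 * (\<Sum>m\<leftarrow>ns. real m / (x - clique_pole \<alpha> s m))"
    by (rule mult_left_mono) simp
  then show ?thesis unfolding secular_def using \<open>x < y\<close> by linarith
qed

lemma secular_continuous_on:
  assumes "\<forall>x\<in>S. \<forall>m\<in>set ns. clique_pole \<alpha> s m < x"
  shows "continuous_on S (secular \<alpha> s ns)"
proof -
  have "continuous_on S (\<lambda>x. \<Sum>i\<in>{0..<length ns}. real (ns ! i) / (x - clique_pole \<alpha> s (ns ! i)))"
    using assms nth_mem by (intro continuous_intros) fastforce
  then show ?thesis
    unfolding secular_def[abs_def] sum_list_sum_nth by (intro continuous_intros) simp
qed

lemma secular_nonneg_far:
  assumes "\<forall>m\<in>set ns. clique_pole \<alpha> s m \<le> M"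
  shows "\<exists>b>M. 0 \<le> secular \<alpha> s ns b"
proof -
  define K where "K = \<alpha> * (real (s + sum_list ns) - 1) + (1 - \<alpha>) * (real s - 1)"
  define c where "c = real s * (1 - \<alpha>)\<^sup>2"
  define b where "b = max M K + 1 + c * real (sum_list ns)"
  have "c * real (sum_list ns) \<ge> 0" unfolding c_def by simp
  then have "M + 1 \<le> b" and "K + 1 + c * real (sum_list ns) \<le> b" unfolding b_def by auto
  have "(\<Sum>m\<leftarrow>ns. real m / (b - clique_pole \<alpha> s m)) \<le> (\<Sum>m\<leftarrow>ns. real m)"
  proof (rule sum_list_mono)
    fix m assume "m \<in> set ns"
    then have "1 \<le> b - clique_pole \<alpha> s m" using assms \<open>M + 1 \<le> b\<close> by fastforce
    then show "real m / (b - clique_pole \<alpha> s m) \<le> real m"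
      using divide_left_mono[of 1 "b - clique_pole \<alpha> s m" "real m"] by simp
  qed
  then have "c * (\<Sum>m\<leftarrow>ns. real m / (b - clique_pole \<alpha> s m)) \<le> c * real (sum_list ns)"
    unfolding c_def by (simp add: sum_list_of_nat mult_left_mono)
  then have "0 \<le> secular \<alpha> s ns b"
    using \<open>K + 1 + c * real (sum_list ns) \<le> b\<close> unfolding secular_def K_def c_def by linarith
  moreover have "M < b" using \<open>M + 1 \<le> b\<close> by simp
  ultimately show ?thesis by blast
qed

lemma secular_nonpos_near_pole:
  assumes "\<alpha> < 1" and "s \<ge> 1" and "m0 \<in> set ns" and "0 < m0" and "\<forall>m\<in>set ns. m \<le> m0"
  shows "\<exists>a>clique_pole \<alpha> s m0. secular \<alpha> s ns a \<le> 0"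
proof -
  define M where "M = clique_pole \<alpha> s m0"
  define K where "K = \<alpha> * (real (s + sum_list ns) - 1) + (1 - \<alpha>) * (real s - 1)"
  define c where "c = real s * (1 - \<alpha>)\<^sup>2"
  define e where "e = c / (\<bar>M - K\<bar> + c + 1)"
  define a where "a = M + e"
  define f where "f m = real m / (a - clique_pole \<alpha> s m)" for m
  have "c > 0" unfolding c_def using assms(1,2) by simp
  then have "0 < e" "e < 1" and c_e: "c / e = \<bar>M - K\<bar> + c + 1" unfolding e_def by auto
  have "f m \<ge> 0" if "m \<in> set ns" for m
    using assms(5) that \<open>0 < e\<close> unfolding f_def a_def M_def clique_pole_def by fastforce
  then have "0 \<le> (\<Sum>m\<leftarrow>remove1 m0 ns. f m)"
    by (intro sum_list_nonneg) (auto dest: set_remove1_subset[THEN subsetD])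
  then have "f m0 \<le> (\<Sum>m\<leftarrow>ns. f m)"
    using sum_list_map_remove1[OF assms(3), of f] by simp
  moreover have "1 / e \<le> f m0"
    using assms(4) \<open>0 < e\<close> unfolding f_def a_def M_def by (simp add: divide_right_mono)
  ultimately have "c / e \<le> c * (\<Sum>m\<leftarrow>ns. f m)"
    using \<open>c > 0\<close> mult_left_mono[of "1 / e" "\<Sum>m\<leftarrow>ns. f m" c] by simp
  then have "secular \<alpha> s ns a \<le> 0"
    using \<open>e < 1\<close> \<open>c > 0\<close> abs_ge_self[of "M - K"]
    unfolding secular_def c_e f_def a_def K_def c_def[symmetric] by linarith
  moreover have "M < a" using \<open>0 < e\<close> unfolding a_def by simp
  ultimately show ?thesis unfolding M_def by blast
qed

lemma secular_root_exists:
  assumes "\<alpha> < 1" and "s \<ge> 1" and "\<exists>m\<in>set ns. 0 < m"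
  shows "\<exists>r. (\<forall>m\<in>set ns. clique_pole \<alpha> s m < r) \<and> secular \<alpha> s ns r = 0"
proof -
  define m0 where "m0 = Max (set ns)"
  have "m0 \<in> set ns" and m0_max: "\<forall>m\<in>set ns. m \<le> m0"
    unfolding m0_def using assms(3) by (auto intro: Max_in)
  then have "0 < m0" using assms(3) by (meson order.strict_trans2)
  have pole_max: "\<forall>m\<in>set ns. clique_pole \<alpha> s m \<le> clique_pole \<alpha> s m0"
    using m0_max unfolding clique_pole_def by simp
  obtain a where a: "clique_pole \<alpha> s m0 < a" "secular \<alpha> s ns a \<le> 0"
    using secular_nonpos_near_pole[OF assms(1,2) \<open>m0 \<in> set ns\<close> \<open>0 < m0\<close> m0_max] by blast
  obtain b where b: "clique_pole \<alpha> s m0 < b" "0 \<le> secular \<alpha> s ns b"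
    using secular_nonneg_far[OF pole_max] by blast
  have above: "\<forall>m\<in>set ns. clique_pole \<alpha> s m < x" if "clique_pole \<alpha> s m0 < x" for x
    using pole_max that by fastforce
  have "a \<le> b"
  proof (rule ccontr)
    assume "\<not> a \<le> b"
    then have "secular \<alpha> s ns b < secular \<alpha> s ns a"
      using secular_strict_mono above[OF b(1)] by simp
    with a(2) b(2) show False by simp
  qed
  moreover have "continuous_on {a..b} (secular \<alpha> s ns)"
    using a(1) above by (intro secular_continuous_on) auto
  ultimately obtain r where "a \<le> r" "secular \<alpha> s ns r = 0"
    using IVT'[of "secular \<alpha> s ns" a 0 b] a(2) b(2) by blast
  moreover have "clique_pole \<alpha> s m0 < r" using a(1) \<open>a \<le> r\<close> by simp
  ultimately show ?thesis using above by blast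
qed

lemma finite_eigenvalues:
  fixes A :: "'a::field mat"
  assumes "A \<in> carrier_mat n n"
  shows "finite {k. eigenvalue A k}"
proof -
  have "char_poly A \<noteq> 0" using degree_monic_char_poly[OF assms] by auto
  then show ?thesis
    unfolding eigenvalue_root_char_poly[OF assms] by (rule poly_roots_finite)
qed

lemma rho_join_cliques_eq_secular_root:
  assumes "0 \<le> \<alpha>" and "\<alpha> < 1" and "s \<ge> 1"
    and poles: "\<forall>m\<in>set ns. clique_pole \<alpha> s m < r" and root: "secular \<alpha> s ns r = 0"
  shows "rho_join_cliques \<alpha> s ns = r"
proof -
  let ?A = "A_alpha \<alpha> (s + sum_list ns) (join_cliques_adj s ns)"
  have "0 \<le> real s * (1 - \<alpha>)\<^sup>2 * (\<Sum>m\<leftarrow>ns. real m / (r - clique_pole \<alpha> s m))"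
    using poles by (intro mult_nonneg_nonneg sum_list_nonneg) auto
  moreover have "0 < (1 - \<alpha>) * real s" using assms(2,3) by simp
  ultimately have large: "\<alpha> * real (s + sum_list ns) - 1 < r"
    using root unfolding secular_def by (simp add: algebra_simps)
  have "y \<le> r" if "eigenvalue ?A y" for y
  proof (rule ccontr)
    assume "\<not> y \<le> r"
    then have "r < y" by simp
    from that obtain v where "eigenvector ?A v y" unfolding eigenvalue_def by blast
    then have "secular \<alpha> s ns y = 0"
      using \<open>r < y\<close> poles large unfolding eigenvector_def
      by (intro join_cliques_eigenvalue_secular_root[OF _ _ _ \<open>0 \<le> \<alpha>\<close>]) auto
    moreover have "secular \<alpha> s ns r < secular \<alpha> s ns y"
      using secular_strict_mono[OF poles \<open>r < y\<close>] .
    ultimately show False using root by simp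
  qed
  moreover have "eigenvalue ?A r"
    using secular_root_is_eigenvalue[OF assms(3) poles root] .
  ultimately show ?thesis
    unfolding rho_join_cliques_def rho_alpha_def
    using finite_eigenvalues[OF A_alpha_carrier_mat] by (intro Max_eqI) auto
qed

lemma rho_join_cliques_secular_root:
  assumes "0 \<le> \<alpha>" and "\<alpha> < 1" and "s \<ge> 1" and "\<exists>m\<in>set ns. 0 < m"
  shows "\<forall>m\<in>set ns. clique_pole \<alpha> s m < rho_join_cliques \<alpha> s ns"
    and "secular \<alpha> s ns (rho_join_cliques \<alpha> s ns) = 0"
  using secular_root_exists[OF assms(2-4)] rho_join_cliques_eq_secular_root[OF assms(1-3)]
  by auto

section \<open>Concentrating the clique sizes\<close>

lemma length_mult_le_sum_list: "\<forall>m\<in>set ms. p \<le> m \<Longrightarrow> p * length ms \<le> sum_list (ms :: nat list)"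
  by (induction ms) auto

lemma frac_transfer:
  fixes c p x y :: real
  assumes "0 \<le> p" and "p \<le> x" and "p \<le> y" and "x + y - p < c"
  shows "x / (c - x) + y / (c - y) \<le> p / (c - p) + (x + y - p) / (c - (x + y - p))"
    and "p < x \<Longrightarrow> p < y \<Longrightarrow> x / (c - x) + y / (c - y) < p / (c - p) + (x + y - p) / (c - (x + y - p))"
proof -
  define q where "q = x + y - p"
  have pos: "0 < c - q" "0 < c - x" "0 < c - y" "0 < c - p" "0 < c"
    using assms unfolding q_def by linarith+
  have sum_eq: "(c - x) + (c - y) = (c - p) + (c - q)" unfolding q_def by simp
  have prod_eq: "(c - x) * (c - y) = (c - p) * (c - q) + (x - p) * (y - p)"
    unfolding q_def by (simp add: algebra_simps)
  have frac_pair: "(c - A) / A + (c - B) / B = c * ((A + B) / (A * B)) - 2"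
    if "A \<noteq> 0" "B \<noteq> 0" for A B
    using that by (simp add: field_simps)
  have lhs: "x / (c - x) + y / (c - y) = c * (((c - x) + (c - y)) / ((c - x) * (c - y))) - 2"
    using frac_pair[of "c - x" "c - y"] pos by simp
  have rhs: "p / (c - p) + q / (c - q) = c * (((c - p) + (c - q)) / ((c - p) * (c - q))) - 2"
    using frac_pair[of "c - p" "c - q"] pos by simp
  have le: "((c - x) + (c - y)) / ((c - x) * (c - y)) \<le> ((c - p) + (c - q)) / ((c - p) * (c - q))"
  proof -
    have "(c - p) * (c - q) \<le> (c - x) * (c - y)"
      unfolding prod_eq using assms(2,3) by simp
    then show ?thesis
      unfolding sum_eq using pos by (intro divide_left_mono) auto
  qed
  show "x / (c - x) + y / (c - y) \<le> p / (c - p) + q / (c - q)"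
    unfolding lhs rhs using mult_left_mono[OF le, of c] pos(5) by simp
  assume "p < x" "p < y"
  then have less: "((c - x) + (c - y)) / ((c - x) * (c - y)) < ((c - p) + (c - q)) / ((c - p) * (c - q))"
  proof -
    have "(c - p) * (c - q) < (c - x) * (c - y)"
      unfolding prod_eq using \<open>p < x\<close> \<open>p < y\<close> by simp
    then show ?thesis
      unfolding sum_eq using pos by (intro divide_strict_left_mono) auto
  qed
  show "x / (c - x) + y / (c - y) < p / (c - p) + q / (c - q)"
    unfolding lhs rhs using mult_strict_left_mono[OF less pos(5)] by simp
qed

lemma sum_list_frac_transfer_le:
  fixes a c p :: real
  assumes "0 \<le> p" and "p \<le> a" and "\<forall>x\<in>set xs. p \<le> x" and "a + (\<Sum>x\<leftarrow>xs. x - p) < c"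
  shows "a / (c - a) + (\<Sum>x\<leftarrow>xs. x / (c - x))
    \<le> (a + (\<Sum>x\<leftarrow>xs. x - p)) / (c - (a + (\<Sum>x\<leftarrow>xs. x - p))) + length xs * (p / (c - p))"
  using assms(2-)
proof (induction xs arbitrary: a)
  case (Cons x xs)
  have "0 \<le> (\<Sum>x\<leftarrow>xs. x - p)" using Cons.prems(2) by (intro sum_list_nonneg) auto
  then have "a + x - p < c" using Cons.prems(3) by simp
  then have "a / (c - a) + x / (c - x) \<le> p / (c - p) + (a + x - p) / (c - (a + x - p))"
    using frac_transfer(1)[OF assms(1) Cons.prems(1)] Cons.prems(2) by simp
  moreover have "(a + x - p) / (c - (a + x - p)) + (\<Sum>x\<leftarrow>xs. x / (c - x))
      \<le> (a + x - p + (\<Sum>x\<leftarrow>xs. x - p)) / (c - (a + x - p + (\<Sum>x\<leftarrow>xs. x - p)))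
        + length xs * (p / (c - p))"
    using Cons.prems by (intro Cons.IH) (auto simp: algebra_simps)
  ultimately show ?case by (simp add: algebra_simps add_divide_distrib)
qed simp

lemma sum_list_frac_transfer_less:
  fixes a c p :: real
  assumes "0 \<le> p" and "p < a" and "\<forall>x\<in>set xs. p \<le> x" and "\<exists>x\<in>set xs. p < x"
    and "a + (\<Sum>x\<leftarrow>xs. x - p) < c"
  shows "a / (c - a) + (\<Sum>x\<leftarrow>xs. x / (c - x))
    < (a + (\<Sum>x\<leftarrow>xs. x - p)) / (c - (a + (\<Sum>x\<leftarrow>xs. x - p))) + length xs * (p / (c - p))"
  using assms(2-)
proof (induction xs arbitrary: a)
  case (Cons x xs)
  have "0 \<le> (\<Sum>x\<leftarrow>xs. x - p)" using Cons.prems(2) by (intro sum_list_nonneg) auto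
  then have "a + x - p < c" using Cons.prems(4) by simp
  show ?case
  proof (cases "p < x")
    case True
    have "a / (c - a) + x / (c - x) < p / (c - p) + (a + x - p) / (c - (a + x - p))"
      using frac_transfer(2)[OF assms(1) _ _ \<open>a + x - p < c\<close>] Cons.prems(1) True by simp
    moreover have "(a + x - p) / (c - (a + x - p)) + (\<Sum>x\<leftarrow>xs. x / (c - x))
        \<le> (a + x - p + (\<Sum>x\<leftarrow>xs. x - p)) / (c - (a + x - p + (\<Sum>x\<leftarrow>xs. x - p)))
          + length xs * (p / (c - p))"
      using Cons.prems True
      by (intro sum_list_frac_transfer_le[OF assms(1)]) (auto simp: algebra_simps)
    ultimately show ?thesis by (simp add: algebra_simps add_divide_distrib)
  next
    case False
    then have "x = p" using Cons.prems(2) by fastforce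
    have "a / (c - a) + (\<Sum>x\<leftarrow>xs. x / (c - x))
        < (a + (\<Sum>x\<leftarrow>xs. x - p)) / (c - (a + (\<Sum>x\<leftarrow>xs. x - p))) + length xs * (p / (c - p))"
      using Cons.prems False \<open>x = p\<close> by (intro Cons.IH) auto
    then show ?thesis using \<open>x = p\<close> by (simp add: algebra_simps add_divide_distrib)
  qed
qed simp

lemma secular_concentrate_less:
  assumes "\<alpha> < 1" and "s \<ge> 1" and "p < n1" and "\<forall>m\<in>set ms. p \<le> m" and "\<exists>m\<in>set ms. p < m"
    and "clique_pole \<alpha> s (n1 + sum_list ms - p * length ms) < x"
  shows "secular \<alpha> s ((n1 + sum_list ms - p * length ms) # replicate (length ms) p) x
    < secular \<alpha> s (n1 # ms) x"
proof -
  define N where "N = n1 + sum_list ms - p * length ms"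
  define c where "c = x + 1 - \<alpha> * real s"
  have "p * length ms \<le> sum_list ms" using assms(4) by (rule length_mult_le_sum_list)
  then have sum_eq: "sum_list (N # replicate (length ms) p) = sum_list (n1 # ms)"
    unfolding N_def by (simp add: sum_list_replicate)
  have "(\<Sum>y\<leftarrow>map real ms. y - real p) = real (sum_list ms) - real (p * length ms)"
    by (induction ms) (simp_all add: algebra_simps)
  then have N_real: "real N = real n1 + (\<Sum>y\<leftarrow>map real ms. y - real p)"
    using \<open>p * length ms \<le> sum_list ms\<close> unfolding N_def by simp
  have pole: "x - clique_pole \<alpha> s m = c - real m" for m
    unfolding c_def clique_pole_def by simp
  have "real N < c" using assms(6) pole[of N] unfolding N_def by simp
  then have "real n1 / (c - real n1) + (\<Sum>y\<leftarrow>map real ms. y / (c - y))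
      < real N / (c - real N) + length (map real ms) * (real p / (c - real p))"
    unfolding N_real using assms(3-5) by (intro sum_list_frac_transfer_less) auto
  then have "(\<Sum>m\<leftarrow>n1 # ms. real m / (x - clique_pole \<alpha> s m))
      < (\<Sum>m\<leftarrow>N # replicate (length ms) p. real m / (x - clique_pole \<alpha> s m))"
    by (simp add: pole sum_list_replicate comp_def)
  moreover have "0 < real s * (1 - \<alpha>)\<^sup>2" using assms(1,2) by simp
  ultimately show ?thesis
    unfolding secular_def sum_eq N_def[symmetric] by (simp add: mult_strict_left_mono)
qed

lemma rho_join_cliques_concentrate_less:
  assumes "0 \<le> \<alpha>" and "\<alpha> < 1" and "s \<ge> 1"
    and "p < n1" and "\<forall>m\<in>set ms. p \<le> m" and "\<exists>m\<in>set ms. p < m"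
  shows "rho_join_cliques \<alpha> s (n1 # ms)
    < rho_join_cliques \<alpha> s ((n1 + sum_list ms - p * length ms) # replicate (length ms) p)"
proof -
  define N where "N = n1 + sum_list ms - p * length ms"
  define ext where "ext = N # replicate (length ms) p"
  define r where "r = rho_join_cliques \<alpha> s (n1 # ms)"
  define r' where "r' = rho_join_cliques \<alpha> s ext"
  have "p * length ms \<le> sum_list ms" using assms(5) by (rule length_mult_le_sum_list)
  then have "n1 \<le> N" unfolding N_def by simp
  have "\<exists>m\<in>set (n1 # ms). 0 < m" and "\<exists>m\<in>set ext. 0 < m"
    using assms(4) \<open>n1 \<le> N\<close> unfolding ext_def by auto
  note root = rho_join_cliques_secular_root[OF assms(1-3) this(1), folded r_def]
    and root' = rho_join_cliques_secular_root[OF assms(1-3) this(2), folded r'_def]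
  have "clique_pole \<alpha> s N < r'" using root'(1) unfolding ext_def by simp
  show ?thesis
  proof (cases "r \<le> clique_pole \<alpha> s N")
    case True
    with \<open>clique_pole \<alpha> s N < r'\<close> show ?thesis unfolding r_def r'_def ext_def N_def by simp
  next
    case False
    have poles: "\<forall>m\<in>set ext. clique_pole \<alpha> s m < r"
      using False assms(4) \<open>n1 \<le> N\<close> unfolding ext_def clique_pole_def by auto
    have "secular \<alpha> s ext r < secular \<alpha> s (n1 # ms) r"
      using secular_concentrate_less[OF assms(2-6)] False unfolding ext_def N_def by simp
    then have "secular \<alpha> s ext r < secular \<alpha> s ext r'" using root(2) root'(2) by simp
    then have "\<not> r' \<le> r"
      using secular_strict_mono[OF root'(1), of r] by (auto simp: order.order_iff_strict)
    then show ?thesis unfolding r_def r'_def ext_def N_def by simp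
  qed
qed

theorem lemma2p6:
  fixes \<alpha> :: real and s t p n :: nat and ns :: "nat list"
  assumes "0 \<le> \<alpha>" and "\<alpha> < 1"
    and "s \<ge> 1" and "t \<ge> 1" and "p \<ge> 1"
    and "length ns = t"
    and "sorted_wrt (\<ge>) ns"
    and "\<forall>x \<in> set ns. x \<ge> p"
    and "n = sum_list ns + s"
    and "ns ! 0 \<le> n - s - p * (t - 1)"
  shows "rho_join_cliques \<alpha> s ns \<le> rho_join_cliques \<alpha> s ((n - s - p * (t - 1)) # replicate (t - 1) p)
     \<and> (rho_join_cliques \<alpha> s ns = rho_join_cliques \<alpha> s ((n - s - p * (t - 1)) # replicate (t - 1) p)
          \<longleftrightarrow> ns = (n - s - p * (t - 1)) # replicate (t - 1) p)"
proof -
  obtain n1 rest where ns: "ns = n1 # rest" using assms(4,6) by (cases ns) auto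
  have rest: "length rest = t - 1" "\<forall>m\<in>set rest. p \<le> m" "\<forall>m\<in>set rest. m \<le> n1"
    using assms(6-8) unfolding ns by auto
  have extremal: "(n - s - p * (t - 1)) # replicate (t - 1) p
      = (n1 + sum_list rest - p * length rest) # replicate (length rest) p"
    using assms(9) rest(1) unfolding ns by simp
  show ?thesis
  proof (cases "\<exists>m\<in>set rest. p < m")
    case True
    then have "p < n1" using rest(3) by (meson order.strict_trans2)
    have "rho_join_cliques \<alpha> s ns
        < rho_join_cliques \<alpha> s ((n - s - p * (t - 1)) # replicate (t - 1) p)"
      using rho_join_cliques_concentrate_less[OF assms(1-3) \<open>p < n1\<close> rest(2) True]
      unfolding extremal ns .
    then show ?thesis by auto
  next
    case False
    then have "\<forall>m\<in>set rest. m = p" using rest(2) by (auto simp: not_less intro: le_antisym)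
    then have "rest = replicate (t - 1) p" using rest(1) by (simp add: replicate_eqI)
    then have "ns = (n - s - p * (t - 1)) # replicate (t - 1) p"
      unfolding extremal ns by (simp add: sum_list_replicate)
    then show ?thesis by simp
  qed
qed

end
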